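(* Let $n\ge 2$ and let $F_{2n}$ be the free group with free basis $x_1,\dots,x_n,y_1,\dots,y_n$. For $i=1,\dots,n-1$ define automorphisms $s_i,r_i\in{\rm Aut}(F_{2n})$ by $$s_i:\ x_i\mapsto x_{i+1}y_{i+1},\quad x_{i+1}\mapsto x_iy_{i+1}^{-1},\qquad r_i:\ x_i\mapsto x_{i+1},\ x_{i+1}\mapsto x_i,\ y_i\mapsto y_{i+1},\ y_{i+1}\mapsto y_i,$$ all generators not listed being fixed. Then the assignment $\theta(\sigma_i)=s_i$, $\theta(\rho_i)=r_i$ ($i=1,\dots,n-1$) extends to a homomorphism $\theta:FVB_n\to{\rm Aut}(F_{2n})$. Moreover, $\theta$ does not preserve the forbidden relations: for $n\ge3$ and each $i=1,\dots,n-2$ one has $\theta(\rho_i\sigma_{i+1}\sigma_i)\neq\theta(\sigma_{i+1}\sigma_i\rho_{i+1})$.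
   Context: The flat virtual braid group $FVB_n$ is the group with generators $\sigma_1,\dots,\sigma_{n-1},\rho_1,\dots,\rho_{n-1}$ and defining relations: $\sigma_i\sigma_j=\sigma_j\sigma_i$ for $|i-j|\ge2$; $\sigma_i\sigma_{i+1}\sigma_i=\sigma_{i+1}\sigma_i\sigma_{i+1}$; $\rho_i^2=1$; $\rho_i\rho_j=\rho_j\rho_i$ for $|i-j|\ge2$; $\rho_i\rho_{i+1}\rho_i=\rho_{i+1}\rho_i\rho_{i+1}$; $\sigma_i\rho_j=\rho_j\sigma_i$ for $|i-j|\ge2$; $\rho_i\rho_{i+1}\sigma_i=\sigma_{i+1}\rho_i\rho_{i+1}$; and $\sigma_i^2=1$ (indices in the obvious ranges). The relations $\rho_i\sigma_{i+1}\sigma_i=\sigma_{i+1}\sigma_i\rho_{i+1}$ ($i=1,\dots,n-2$) are called the forbidden relations. Automorphisms act on the right: for bijections $f,g$ the product $fg$ is the map $x\mapsto g(f(x))$; a homomorphism $FVB_n\to{\rm Aut}(F_{2n})$ is understood with respect to this multiplication. *)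

theory Defs
  imports "HOL-Algebra.Algebra"
begin

text \<open>A letter (b, a) stands for a if b = False and for a inverse if b = True.\<close>

type_synonym 'a word = "(bool \<times> 'a) list"

fun red_cons :: "bool \<times> 'a \<Rightarrow> 'a word \<Rightarrow> 'a word" where
  "red_cons l [] = [l]"
| "red_cons l (m # ws) = (if fst m = (\<not> fst l) \<and> snd m = snd l then ws else l # m # ws)"

definition reduce :: "'a word \<Rightarrow> 'a word" where
  "reduce w = foldr red_cons w []"

fun reduced :: "'a word \<Rightarrow> bool" where
  "reduced [] = True"
| "reduced [l] = True"
| "reduced (l # m # ws) = (\<not> (fst m = (\<not> fst l) \<and> snd m = snd l) \<and> reduced (m # ws))"

definition inv_word :: "'a word \<Rightarrow> 'a word" where
  "inv_word w = rev (map (\<lambda>(b, a). (\<not> b, a)) w)"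

definition free_grp :: "'a set \<Rightarrow> 'a word monoid" where
  "free_grp A = \<lparr> carrier = {w. reduced w \<and> snd ` set w \<subseteq> A},
                 monoid.mult = (\<lambda>v w. reduce (v @ w)),
                 one = [] \<rparr>"

definition gen :: "'a \<Rightarrow> 'a word" where
  "gen a = [(False, a)]"

definition free_ext :: "('a \<Rightarrow> 'a word) \<Rightarrow> 'a word \<Rightarrow> 'a word" where
  "free_ext f w = reduce (concat (map (\<lambda>(b, a). if b then inv_word (f a) else f a) w))"

definition normal_closure :: "('a, 'b) monoid_scheme \<Rightarrow> 'a set \<Rightarrow> 'a set" where
  "normal_closure G R =
     generate G {g \<otimes>\<^bsub>G\<^esub> r \<otimes>\<^bsub>G\<^esub> inv\<^bsub>G\<^esub> g | g r. g \<in> carrier G \<and> r \<in> R}"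

text \<open>Group with generators A and relations given by pairs of words (lhs, rhs).\<close>
definition presented_grp :: "'a set \<Rightarrow> ('a word \<times> 'a word) set \<Rightarrow> 'a word set monoid" where
  "presented_grp A Rels =
     free_grp A Mod normal_closure (free_grp A) {reduce (u @ inv_word v) | u v. (u, v) \<in> Rels}"

definition pclass :: "'a set \<Rightarrow> ('a word \<times> 'a word) set \<Rightarrow> 'a word \<Rightarrow> 'a word set" where
  "pclass A Rels w =
     r_coset (free_grp A) (normal_closure (free_grp A) {reduce (u @ inv_word v) | u v. (u, v) \<in> Rels})
       (reduce w)"

section \<open>Automorphism group with right action: (f g)(x) = g (f x)\<close>

definition AutR :: "('a, 'b) monoid_scheme \<Rightarrow> ('a \<Rightarrow> 'a) monoid" where
  "AutR G = \<lparr> carrier = auto G,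
             monoid.mult = (\<lambda>f g. compose (carrier G) g f),
             one = (\<lambda>x \<in> carrier G. x) \<rparr>"

datatype bgen = Sig nat | Rho nat

definition fvb_gens :: "nat \<Rightarrow> bgen set" where
  "fvb_gens n = {Sig i | i. 1 \<le> i \<and> i \<le> n - 1} \<union> {Rho i | i. 1 \<le> i \<and> i \<le> n - 1}"

abbreviation sg :: "nat \<Rightarrow> bgen word" where "sg i \<equiv> [(False, Sig i)]"
abbreviation rh :: "nat \<Rightarrow> bgen word" where "rh i \<equiv> [(False, Rho i)]"

definition fvb_rels :: "nat \<Rightarrow> (bgen word \<times> bgen word) set" where
  "fvb_rels n =
      {(sg i @ sg j, sg j @ sg i) | i j. 1 \<le> i \<and> i \<le> n - 1 \<and> 1 \<le> j \<and> j \<le> n - 1 \<and> (i + 2 \<le> j \<or> j + 2 \<le> i)}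
    \<union> {(sg i @ sg (i+1) @ sg i, sg (i+1) @ sg i @ sg (i+1)) | i. 1 \<le> i \<and> i + 1 \<le> n - 1}
    \<union> {(rh i @ rh i, []) | i. 1 \<le> i \<and> i \<le> n - 1}
    \<union> {(rh i @ rh j, rh j @ rh i) | i j. 1 \<le> i \<and> i \<le> n - 1 \<and> 1 \<le> j \<and> j \<le> n - 1 \<and> (i + 2 \<le> j \<or> j + 2 \<le> i)}
    \<union> {(rh i @ rh (i+1) @ rh i, rh (i+1) @ rh i @ rh (i+1)) | i. 1 \<le> i \<and> i + 1 \<le> n - 1}
    \<union> {(sg i @ rh j, rh j @ sg i) | i j. 1 \<le> i \<and> i \<le> n - 1 \<and> 1 \<le> j \<and> j \<le> n - 1 \<and> (i + 2 \<le> j \<or> j + 2 \<le> i)}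
    \<union> {(rh i @ rh (i+1) @ sg i, sg (i+1) @ rh i @ rh (i+1)) | i. 1 \<le> i \<and> i + 1 \<le> n - 1}
    \<union> {(sg i @ sg i, []) | i. 1 \<le> i \<and> i \<le> n - 1}"

definition FVB :: "nat \<Rightarrow> bgen word set monoid" where
  "FVB n = presented_grp (fvb_gens n) (fvb_rels n)"

definition fvb_elt :: "nat \<Rightarrow> bgen word \<Rightarrow> bgen word set" where
  "fvb_elt n w = pclass (fvb_gens n) (fvb_rels n) w"

datatype fgen = Xg nat | Yg nat

definition F2n_gens :: "nat \<Rightarrow> fgen set" where
  "F2n_gens n = {Xg j | j. 1 \<le> j \<and> j \<le> n} \<union> {Yg j | j. 1 \<le> j \<and> j \<le> n}"

definition F2n :: "nat \<Rightarrow> fgen word monoid" where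
  "F2n n = free_grp (F2n_gens n)"

definition s_img :: "nat \<Rightarrow> fgen \<Rightarrow> fgen word" where
  "s_img i a = (if a = Xg i then [(False, Xg (i+1)), (False, Yg (i+1))]
                else if a = Xg (i+1) then [(False, Xg i), (True, Yg (i+1))]
                else gen a)"

definition r_img :: "nat \<Rightarrow> fgen \<Rightarrow> fgen word" where
  "r_img i a = (if a = Xg i then gen (Xg (i+1))
                else if a = Xg (i+1) then gen (Xg i)
                else if a = Yg i then gen (Yg (i+1))
                else if a = Yg (i+1) then gen (Yg i)
                else gen a)"

definition s_aut :: "nat \<Rightarrow> nat \<Rightarrow> fgen word \<Rightarrow> fgen word" where
  "s_aut n i = (\<lambda>w \<in> carrier (F2n n). free_ext (s_img i) w)"

definition r_aut :: "nat \<Rightarrow> nat \<Rightarrow> fgen word \<Rightarrow> fgen word" where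
  "r_aut n i = (\<lambda>w \<in> carrier (F2n n). free_ext (r_img i) w)"

end

(* The homomorphism comes from the universal property of the presented group FVB_n.  The
   words of s_i and r_i on the free basis are involutive, so they define automorphisms of F_2n.
   A defining relation u = v of FVB_n is respected because the actions of u and v agree on the
   free basis, and an endomorphism of a free group is determined by its values there.  The
   forbidden relation fails at x_(i+2): rho_i sigma_(i+1) sigma_i sends it to
   x_i y_(i+1)^-1 y_(i+2)^-1, whereas sigma_(i+1) sigma_i rho_(i+1) sends it to
   x_i y_(i+2)^-1 y_(i+1)^-1. *)

theory Submission
  imports Defs
begin

definition ninv :: "bool \<times> 'a \<Rightarrow> bool \<times> 'a" where
  "ninv l = (\<not> fst l, snd l)"

lemma ninv_ninv [simp]: "ninv (ninv l) = l"
  by (simp add: ninv_def)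

lemma red_cons_eq:
  "red_cons l ws = (case ws of [] \<Rightarrow> [l] | m # ws' \<Rightarrow> if m = ninv l then ws' else l # ws)"
  by (cases ws) (auto simp: ninv_def prod_eq_iff)

lemma reduced_Cons: "reduced (l # ws) \<longleftrightarrow> reduced ws \<and> (ws = [] \<or> hd ws \<noteq> ninv l)"
  by (cases ws) (auto simp: ninv_def prod_eq_iff)

lemma reduced_red_cons: "reduced ws \<Longrightarrow> reduced (red_cons l ws)"
  by (cases ws) (auto simp: reduced_Cons red_cons_eq)

lemma reduced_foldr_red_cons: "reduced r \<Longrightarrow> reduced (foldr red_cons u r)"
  by (induction u) (auto intro: reduced_red_cons)

lemma reduced_reduce: "reduced (reduce w)"
  unfolding reduce_def by (rule reduced_foldr_red_cons) simp

lemma red_cons_ninv_cancel: "reduced v \<Longrightarrow> red_cons l (red_cons (ninv l) v) = v"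
  by (cases v) (auto simp: red_cons_eq reduced_Cons split: list.splits)

lemma reduce_Nil [simp]: "reduce [] = []"
  and reduce_Cons [simp]: "reduce (l # w) = red_cons l (reduce w)"
  by (simp_all add: reduce_def)

lemma reduce_append: "reduce (u @ v) = foldr red_cons u (reduce v)"
  by (simp add: reduce_def)

lemma reduce_reduced: "reduced w \<Longrightarrow> reduce w = w"
  by (induction w) (auto simp: red_cons_eq reduced_Cons split: list.splits)

lemma set_red_cons: "set (red_cons l ws) \<subseteq> insert l (set ws)"
  by (cases ws) auto

lemma set_reduce: "set (reduce w) \<subseteq> set w"
  by (induction w) (use set_red_cons in fastforce)+

lemma reduce_invariant:
  assumes cong: "\<And>l x y. \<phi> x = \<phi> y \<Longrightarrow> \<phi> (l # x) = \<phi> (l # y)"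
    and cancel: "\<And>l w. \<phi> (l # ninv l # w) = \<phi> w"
  shows "\<phi> (reduce w) = \<phi> w"
proof -
  have red_cons: "\<phi> (red_cons l r) = \<phi> (l # r)" for l r
    by (cases r) (auto simp: red_cons_eq cancel)
  have "\<phi> (foldr red_cons u r) = \<phi> (u @ r)" for u r
    by (induction u) (auto simp: red_cons intro: cong)
  from this[of w "[]"] show ?thesis
    by (simp add: reduce_def)
qed

lemma foldr_red_cons_reduce: "reduced r \<Longrightarrow> foldr red_cons (reduce y) r = foldr red_cons y r"
  by (rule reduce_invariant[where \<phi> = "\<lambda>y. foldr red_cons y r"])
    (auto simp: red_cons_ninv_cancel reduced_foldr_red_cons)

lemma reduce_absorb: "reduce (x @ reduce y @ z) = reduce (x @ y @ z)"
  by (simp add: reduce_append foldr_red_cons_reduce reduced_reduce)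

lemma reduce_absorb_left: "reduce (reduce y @ z) = reduce (y @ z)"
  using reduce_absorb[of "[]"] by simp

lemma reduce_absorb_right: "reduce (x @ reduce y) = reduce (x @ y)"
  using reduce_absorb[of _ _ "[]"] by simp

lemma inv_word_Nil [simp]: "inv_word [] = []"
  by (simp add: inv_word_def)

lemma inv_word_Cons: "inv_word (l # w) = inv_word w @ [ninv l]"
  by (simp add: inv_word_def ninv_def case_prod_beta)

lemma inv_word_append: "inv_word (u @ v) = inv_word v @ inv_word u"
  by (simp add: inv_word_def)

lemma inv_word_inv_word [simp]: "inv_word (inv_word w) = w"
  by (induction w) (simp_all add: inv_word_Cons inv_word_append)

lemma set_inv_word: "snd ` set (inv_word w) = snd ` set w"
  by (induction w) (auto simp: inv_word_Cons ninv_def)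

lemma reduce_cancel: "reduce (x @ w @ inv_word w @ y) = reduce (x @ y)"
proof -
  have "reduced r \<Longrightarrow> foldr red_cons (w @ inv_word w) r = r" for r
    by (induction w arbitrary: r)
      (simp_all add: inv_word_Cons red_cons_ninv_cancel reduced_red_cons)
  then show ?thesis
    by (simp add: reduce_append reduced_reduce)
qed

lemma reduce_cancel': "reduce (x @ inv_word w @ w @ y) = reduce (x @ y)"
  using reduce_cancel[of x "inv_word w" y] by simp

lemma reduce_inv_word_reduce: "reduce (inv_word (reduce w)) = reduce (inv_word w)"
proof (rule reduce_invariant[where \<phi> = "\<lambda>w. reduce (inv_word w)"])
  fix l :: "bool \<times> 'a" and x y :: "'a word" assume "reduce (inv_word x) = reduce (inv_word y)"
  then show "reduce (inv_word (l # x)) = reduce (inv_word (l # y))"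
    by (metis inv_word_Cons reduce_absorb_left)
next
  fix l :: "bool \<times> 'a" and w
  show "reduce (inv_word (l # ninv l # w)) = reduce (inv_word w)"
    using reduce_cancel[of "inv_word w" "[l]" "[]"] by (simp add: inv_word_Cons)
qed

lemma free_grp_carrier: "carrier (free_grp A) = {w. reduced w \<and> snd ` set w \<subseteq> A}"
  and free_grp_mult: "x \<otimes>\<^bsub>free_grp A\<^esub> y = reduce (x @ y)"
  and free_grp_one: "\<one>\<^bsub>free_grp A\<^esub> = []"
  by (simp_all add: free_grp_def)

lemma reduce_in_free_grp: "snd ` set w \<subseteq> A \<Longrightarrow> reduce w \<in> carrier (free_grp A)"
  using set_reduce[of w] reduced_reduce[of w] by (auto simp: free_grp_carrier)

lemma group_free_grp: "group (free_grp A)"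
proof (rule groupI)
  fix x y assume "x \<in> carrier (free_grp A)" "y \<in> carrier (free_grp A)"
  then show "x \<otimes>\<^bsub>free_grp A\<^esub> y \<in> carrier (free_grp A)"
    unfolding free_grp_mult by (intro reduce_in_free_grp) (force simp: free_grp_carrier)
next
  fix x y z
  show "x \<otimes>\<^bsub>free_grp A\<^esub> y \<otimes>\<^bsub>free_grp A\<^esub> z = x \<otimes>\<^bsub>free_grp A\<^esub> (y \<otimes>\<^bsub>free_grp A\<^esub> z)"
    by (simp add: free_grp_mult reduce_absorb_left reduce_absorb_right)
next
  fix x assume x: "x \<in> carrier (free_grp A)"
  then show "\<one>\<^bsub>free_grp A\<^esub> \<otimes>\<^bsub>free_grp A\<^esub> x = x"
    by (simp add: free_grp_mult free_grp_one free_grp_carrier reduce_reduced)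
  show "\<exists>y\<in>carrier (free_grp A). y \<otimes>\<^bsub>free_grp A\<^esub> x = \<one>\<^bsub>free_grp A\<^esub>"
  proof
    show "reduce (inv_word x) \<in> carrier (free_grp A)"
      using x by (intro reduce_in_free_grp) (auto simp: set_inv_word free_grp_carrier)
    show "reduce (inv_word x) \<otimes>\<^bsub>free_grp A\<^esub> x = \<one>\<^bsub>free_grp A\<^esub>"
      using reduce_cancel'[of "[]" x "[]"] by (simp add: free_grp_mult free_grp_one reduce_absorb_left)
  qed
qed (simp add: free_grp_one free_grp_carrier)

definition lift_letter :: "('b, 'c) monoid_scheme \<Rightarrow> ('a \<Rightarrow> 'b) \<Rightarrow> bool \<times> 'a \<Rightarrow> 'b" where
  "lift_letter H f l = (if fst l then inv\<^bsub>H\<^esub> f (snd l) else f (snd l))"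

definition lift_word :: "('b, 'c) monoid_scheme \<Rightarrow> ('a \<Rightarrow> 'b) \<Rightarrow> 'a word \<Rightarrow> 'b" where
  "lift_word H f w = foldr (\<lambda>l y. lift_letter H f l \<otimes>\<^bsub>H\<^esub> y) w \<one>\<^bsub>H\<^esub>"

context group
begin

lemma lift_word_Nil [simp]: "lift_word G f [] = \<one>"
  and lift_word_Cons: "lift_word G f (l # w) = lift_letter G f l \<otimes> lift_word G f w"
  by (simp_all add: lift_word_def)

context
  fixes f :: "'c \<Rightarrow> 'a"
  assumes f: "range f \<subseteq> carrier G"
begin

lemma lift_letter_closed: "lift_letter G f l \<in> carrier G"
  using f by (auto simp: lift_letter_def)

lemma lift_letter_ninv: "lift_letter G f (ninv l) = inv (lift_letter G f l)"
  using f by (auto simp: lift_letter_def ninv_def intro!: inv_inv[symmetric])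

lemma lift_word_singleton: "lift_word G f [(False, a)] = f a"
  using f by (simp add: lift_word_Cons lift_letter_def image_subset_iff)

lemma lift_word_closed: "lift_word G f w \<in> carrier G"
  by (induction w) (simp_all add: lift_word_Cons lift_letter_closed)

lemma lift_word_append: "lift_word G f (u @ v) = lift_word G f u \<otimes> lift_word G f v"
  by (induction u) (simp_all add: lift_word_Cons lift_letter_closed lift_word_closed m_assoc)

lemma lift_word_reduce: "lift_word G f (reduce w) = lift_word G f w"
  by (rule reduce_invariant)
    (simp_all add: lift_word_Cons lift_letter_ninv lift_letter_closed lift_word_closed
      flip: m_assoc)

lemma lift_word_inv_word: "lift_word G f (inv_word w) = inv (lift_word G f w)"
  by (induction w)
    (simp_all add: inv_word_Cons lift_word_append lift_word_Cons lift_letter_ninv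
      lift_letter_closed lift_word_closed inv_mult_group)

lemma lift_word_hom: "lift_word G f \<in> hom (free_grp A) G"
  by (auto simp: hom_def free_grp_mult lift_word_reduce lift_word_append lift_word_closed)

end

end

definition ext_letter :: "('a \<Rightarrow> 'a word) \<Rightarrow> bool \<times> 'a \<Rightarrow> 'a word" where
  "ext_letter f l = (if fst l then inv_word (f (snd l)) else f (snd l))"

lemma ext_letter_simps [simp]:
  "ext_letter f (False, a) = f a" "ext_letter f (True, a) = inv_word (f a)"
  by (simp_all add: ext_letter_def)

lemma ext_letter_ninv: "ext_letter f (ninv l) = inv_word (ext_letter f l)"
  by (simp add: ext_letter_def ninv_def)

lemma free_ext_eq: "free_ext f w = reduce (concat (map (ext_letter f) w))"
proof -
  have "ext_letter f = (\<lambda>(b, a). if b then inv_word (f a) else f a)"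
    by (auto simp: fun_eq_iff ext_letter_def)
  then show ?thesis
    by (simp add: free_ext_def)
qed

lemma reduced_free_ext: "reduced (free_ext f w)"
  by (simp add: free_ext_eq reduced_reduce)

lemma free_ext_Nil [simp]: "free_ext f [] = []"
  by (simp add: free_ext_eq)

lemma free_ext_Cons: "free_ext f (l # w) = reduce (ext_letter f l @ free_ext f w)"
  by (simp add: free_ext_eq reduce_absorb_right)

lemma free_ext_append: "free_ext f (u @ v) = reduce (free_ext f u @ free_ext f v)"
  by (simp add: free_ext_eq reduce_absorb_left reduce_absorb_right)

lemma free_ext_reduce: "free_ext f (reduce w) = free_ext f w"
proof (rule reduce_invariant)
  fix l w
  show "free_ext f (l # ninv l # w) = free_ext f w"
    using reduce_cancel[of "[]" "ext_letter f l" "free_ext f w"]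
    by (simp add: free_ext_Cons ext_letter_ninv reduce_absorb_right reduce_reduced reduced_free_ext)
qed (simp add: free_ext_Cons)

lemma free_ext_cong: "(\<And>a. a \<in> snd ` set w \<Longrightarrow> f a = g a) \<Longrightarrow> free_ext f w = free_ext g w"
  unfolding free_ext_eq by (metis (no_types, lifting) ext_letter_def imageI list.map_cong)

lemma free_ext_gen: "free_ext gen w = reduce w"
proof -
  have "ext_letter gen l = [l]" for l :: "bool \<times> 'a"
    by (cases l) (auto simp: ext_letter_def gen_def inv_word_def)
  then have "concat (map (ext_letter gen) w) = w"
    by (induction w) simp_all
  then show ?thesis
    by (simp add: free_ext_eq)
qed

lemma free_ext_inv_word: "free_ext f (inv_word w) = reduce (inv_word (free_ext f w))"
proof -
  have "concat (map (ext_letter f) (inv_word w)) = inv_word (concat (map (ext_letter f) w))"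
    by (induction w) (simp_all add: inv_word_Cons inv_word_append ext_letter_ninv)
  then show ?thesis
    by (simp add: free_ext_eq reduce_inv_word_reduce)
qed

lemma free_ext_free_ext: "free_ext g (free_ext f w) = free_ext (\<lambda>a. free_ext g (f a)) w"
  (is "_ = free_ext ?h w")
proof (induction w)
  case (Cons l w)
  have letter: "reduce (ext_letter ?h l) = free_ext g (ext_letter f l)"
    by (simp add: ext_letter_def free_ext_inv_word reduce_reduced reduced_free_ext)
  have "free_ext g (free_ext f (l # w)) = reduce (free_ext g (ext_letter f l) @ free_ext g (free_ext f w))"
    by (simp add: free_ext_Cons free_ext_reduce free_ext_append)
  also have "\<dots> = reduce (reduce (ext_letter ?h l) @ free_ext ?h w)"
    by (simp only: letter Cons)
  also have "\<dots> = free_ext ?h (l # w)"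
    by (simp add: free_ext_Cons reduce_absorb_left)
  finally show ?case .
qed simp

lemma fold_free_ext_free_ext:
  "fold free_ext fs (free_ext h x) = free_ext (\<lambda>a. fold free_ext fs (h a)) x"
  by (induction fs arbitrary: h) (simp_all add: free_ext_free_ext)

lemma free_ext_closed:
  assumes "f ` A \<subseteq> carrier (free_grp A)" "snd ` set w \<subseteq> A"
  shows "free_ext f w \<in> carrier (free_grp A)"
  unfolding free_ext_eq
proof (rule reduce_in_free_grp)
  have "snd ` set (ext_letter f l) \<subseteq> A" if "l \<in> set w" for l
    using assms that by (auto simp: ext_letter_def set_inv_word free_grp_carrier)
  then show "snd ` set (concat (map (ext_letter f) w)) \<subseteq> A"
    by auto
qed

definition free_endo :: "'a set \<Rightarrow> ('a \<Rightarrow> 'a word) \<Rightarrow> 'a word \<Rightarrow> 'a word" where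
  "free_endo A f = (\<lambda>w \<in> carrier (free_grp A). free_ext f w)"

lemma free_endo_hom:
  assumes "f ` A \<subseteq> carrier (free_grp A)"
  shows "free_endo A f \<in> hom (free_grp A) (free_grp A)"
proof (rule homI)
  interpret free_grp: group "free_grp A"
    by (rule group_free_grp)
  fix x assume x: "x \<in> carrier (free_grp A)"
  then have "snd ` set x \<subseteq> A"
    by (simp add: free_grp_carrier)
  with x assms show "free_endo A f x \<in> carrier (free_grp A)"
    by (simp add: free_endo_def free_ext_closed)
  fix y assume "y \<in> carrier (free_grp A)"
  with x show
    "free_endo A f (x \<otimes>\<^bsub>free_grp A\<^esub> y) = free_endo A f x \<otimes>\<^bsub>free_grp A\<^esub> free_endo A f y"
    using free_grp.m_closed[of x y]
    by (simp add: free_endo_def free_grp_mult free_ext_reduce free_ext_append)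
qed

lemma involution_in_auto:
  assumes "h \<in> hom G G" "h \<in> extensional (carrier G)" "\<And>x. x \<in> carrier G \<Longrightarrow> h (h x) = x"
  shows "h \<in> auto G"
proof -
  have "bij_betw h (carrier G) (carrier G)"
    by (rule bij_betwI[where g = h]) (use assms hom_in_carrier in \<open>auto simp: Pi_iff\<close>)
  then show ?thesis
    using assms by (simp add: auto_def Bij_def)
qed

lemma free_endo_in_auto:
  assumes "f ` A \<subseteq> carrier (free_grp A)" and inv: "\<And>a. a \<in> A \<Longrightarrow> free_ext f (f a) = gen a"
  shows "free_endo A f \<in> auto (free_grp A)"
proof (rule involution_in_auto)
  fix x assume x: "x \<in> carrier (free_grp A)"
  then have "free_ext f (free_ext f x) = free_ext gen x"
    unfolding free_ext_free_ext by (intro free_ext_cong) (auto simp: inv free_grp_carrier)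
  then show "free_endo A f (free_endo A f x) = x"
    using x free_endo_hom[OF assms(1)] hom_in_carrier
    by (fastforce simp: free_endo_def free_ext_gen reduce_reduced free_grp_carrier)
qed (rule free_endo_hom[OF assms(1)], simp add: free_endo_def)

lemma AutR_carrier: "carrier (AutR G) = auto G"
  and AutR_mult: "f \<otimes>\<^bsub>AutR G\<^esub> g = compose (carrier G) g f"
  and AutR_one: "\<one>\<^bsub>AutR G\<^esub> = (\<lambda>x \<in> carrier G. x)"
  by (simp_all add: AutR_def)

lemma AutoGroup_simps:
  "carrier (AutoGroup G) = auto G"
  "\<one>\<^bsub>AutoGroup G\<^esub> = (\<lambda>x \<in> carrier G. x)"
  "f \<in> auto G \<Longrightarrow> g \<in> auto G \<Longrightarrow> g \<otimes>\<^bsub>AutoGroup G\<^esub> f = compose (carrier G) g f"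
  by (auto simp: AutoGroup_def BijGroup_def auto_def)

text \<open>AutR G is the opposite group of AutoGroup G.\<close>

lemma (in group) group_AutR: "group (AutR G)"
proof -
  interpret Aut: group "AutoGroup G"
    by (rule AutoGroup)
  show ?thesis
  proof (rule groupI)
    fix f g assume "f \<in> carrier (AutR G)" "g \<in> carrier (AutR G)"
    then show "f \<otimes>\<^bsub>AutR G\<^esub> g \<in> carrier (AutR G)"
      using Aut.m_closed[of g f] by (simp add: AutR_carrier AutR_mult AutoGroup_simps)
  next
    fix f g h assume "f \<in> carrier (AutR G)" "g \<in> carrier (AutR G)" "h \<in> carrier (AutR G)"
    then show "f \<otimes>\<^bsub>AutR G\<^esub> g \<otimes>\<^bsub>AutR G\<^esub> h = f \<otimes>\<^bsub>AutR G\<^esub> (g \<otimes>\<^bsub>AutR G\<^esub> h)"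
      using Aut.m_assoc[of h g f] Aut.m_closed[of g f] Aut.m_closed[of h g]
      by (simp add: AutR_carrier AutR_mult AutoGroup_simps)
  next
    fix f assume f: "f \<in> carrier (AutR G)"
    then show "\<one>\<^bsub>AutR G\<^esub> \<otimes>\<^bsub>AutR G\<^esub> f = f"
      using Aut.r_one[of f] Aut.one_closed by (simp add: AutR_carrier AutR_mult AutR_one AutoGroup_simps)
    have inv: "inv\<^bsub>AutoGroup G\<^esub> f \<in> auto G"
      using f Aut.inv_closed by (simp add: AutR_carrier AutoGroup_simps)
    show "\<exists>g\<in>carrier (AutR G). g \<otimes>\<^bsub>AutR G\<^esub> f = \<one>\<^bsub>AutR G\<^esub>"
    proof
      show "inv\<^bsub>AutoGroup G\<^esub> f \<otimes>\<^bsub>AutR G\<^esub> f = \<one>\<^bsub>AutR G\<^esub>"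
        using f Aut.r_inv[of f] AutoGroup_simps(3)[OF inv, of f]
        by (simp add: AutR_carrier AutR_mult AutR_one AutoGroup_simps)
    qed (simp add: inv AutR_carrier)
  qed (simp add: AutR_carrier AutR_one id_in_auto)
qed

lemma auto_closed: "h \<in> auto G \<Longrightarrow> x \<in> carrier G \<Longrightarrow> h x \<in> carrier G"
  by (auto simp: auto_def hom_def)

lemma (in group) lift_word_AutR_apply:
  assumes "range f \<subseteq> auto G" "\<forall>l \<in> set w. \<not> fst l" "x \<in> carrier G"
  shows "lift_word (AutR G) f w x = fold (\<lambda>l. f (snd l)) w x"
  using assms(2,3)
proof (induction w arbitrary: x)
  case Nil
  then show ?case
    by (simp add: group.lift_word_Nil[OF group_AutR] AutR_one)
next
  case (Cons l w)
  have f_closed: "range f \<subseteq> carrier (AutR G)"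
    using assms(1) by (simp add: AutR_carrier)
  have "lift_word (AutR G) f (l # w) x = lift_word (AutR G) f w (f (snd l) x)"
    using Cons.prems
    by (simp add: group.lift_word_Cons[OF group_AutR] lift_letter_def AutR_mult compose_def)
  also have "\<dots> = fold (\<lambda>l. f (snd l)) (l # w) x"
    using Cons assms(1) by (simp add: auto_closed rangeI subsetD)
  finally show ?case .
qed

lemma lift_word_AutR_free_endo:
  assumes auto: "\<And>b. free_endo A (img b) \<in> auto (free_grp A)"
    and "\<forall>l \<in> set w. \<not> fst l" "x \<in> carrier (free_grp A)"
  shows "lift_word (AutR (free_grp A)) (\<lambda>b. free_endo A (img b)) w x
           = fold free_ext (map (img \<circ> snd) w) x"
proof -
  have "fold (\<lambda>l. free_endo A (img (snd l))) w x = fold free_ext (map (img \<circ> snd) w) x"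
    using assms(3)
  proof (induction w arbitrary: x)
    case (Cons l w)
    then show ?case
      using auto_closed[OF auto] by (simp add: free_endo_def)
  qed simp
  with assms show ?thesis
    by (simp add: group.lift_word_AutR_apply[OF group_free_grp] image_subset_iff)
qed

lemma lift_word_AutR_free_endo_eqI:
  assumes auto: "\<And>b. free_endo A (img b) \<in> auto (free_grp A)"
    and pos: "\<forall>l \<in> set u. \<not> fst l" "\<forall>l \<in> set v. \<not> fst l"
    and gens: "\<And>a. a \<in> A \<Longrightarrow>
      fold free_ext (map (img \<circ> snd) u) (gen a) = fold free_ext (map (img \<circ> snd) v) (gen a)"
  shows "lift_word (AutR (free_grp A)) (\<lambda>b. free_endo A (img b)) u
           = lift_word (AutR (free_grp A)) (\<lambda>b. free_endo A (img b)) v"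
    (is "?L u = ?L v")
proof -
  interpret Aut: group "AutR (free_grp A)"
    by (rule group.group_AutR[OF group_free_grp])
  have closed: "?L w \<in> auto (free_grp A)" for w
    using Aut.lift_word_closed[of "\<lambda>b. free_endo A (img b)" w] auto by (auto simp: AutR_carrier)
  have "fold free_ext fs x = free_ext (\<lambda>a. fold free_ext fs (gen a)) x"
    if "x \<in> carrier (free_grp A)" for fs x
    using that fold_free_ext_free_ext[of fs gen x]
    by (simp add: free_ext_gen reduce_reduced free_grp_carrier)
  then have "?L u x = ?L v x" if "x \<in> carrier (free_grp A)" for x
    using that auto pos gens
    by (simp add: lift_word_AutR_free_endo) (auto intro!: free_ext_cong simp: free_grp_carrier)
  then show ?thesis
    using closed by (intro extensionalityI[where A = "carrier (free_grp A)"]) (auto simp: auto_def Bij_def)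
qed

lemma (in group) normal_closure_normal:
  assumes "R \<subseteq> carrier G"
  shows "normal_closure G R \<lhd> G"
  unfolding normal_closure_def
proof (rule normal_generateI)
  fix h k assume "h \<in> {g \<otimes> r \<otimes> inv g | g r. g \<in> carrier G \<and> r \<in> R}" "k \<in> carrier G"
  then obtain g r where "h = g \<otimes> r \<otimes> inv g" "g \<in> carrier G" "r \<in> R" "k \<in> carrier G"
    by blast
  moreover have "k \<otimes> (g \<otimes> r \<otimes> inv g) \<otimes> inv k = (k \<otimes> g) \<otimes> r \<otimes> inv (k \<otimes> g)"
    using calculation assms by (auto simp: m_assoc inv_mult_group)
  ultimately show "k \<otimes> h \<otimes> inv k \<in> {g \<otimes> r \<otimes> inv g | g r. g \<in> carrier G \<and> r \<in> R}"
    by blast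
qed (use assms in auto)

lemma (in normal) normal_closure_subset: "R \<subseteq> H \<Longrightarrow> normal_closure G R \<subseteq> H"
  unfolding normal_closure_def
  using inv_op_closed2 by (intro generate_subgroup_incl is_subgroup) blast

theorem presented_grp_universal:
  assumes H: "group H" and f: "range f \<subseteq> carrier H"
    and rels: "\<And>u v. (u, v) \<in> Rels \<Longrightarrow> lift_word H f u = lift_word H f v"
    and rels_gens: "\<And>u v. (u, v) \<in> Rels \<Longrightarrow> snd ` set u \<subseteq> A \<and> snd ` set v \<subseteq> A"
  obtains \<theta> where "\<theta> \<in> hom (presented_grp A Rels) H"
    and "\<And>w. snd ` set w \<subseteq> A \<Longrightarrow> \<theta> (pclass A Rels w) = lift_word H f w"
proof -
  interpret F: group "free_grp A"
    by (rule group_free_grp)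
  interpret L: group_hom "free_grp A" H "lift_word H f"
    using H group.lift_word_hom[OF H f] by (intro group_hom.intro group_hom_axioms.intro F.is_group)
  let ?R = "{reduce (u @ inv_word v) | u v. (u, v) \<in> Rels}"
  have R_closed: "?R \<subseteq> carrier (free_grp A)"
  proof
    fix r assume "r \<in> ?R"
    then obtain u v where r: "r = reduce (u @ inv_word v)" and uv: "(u, v) \<in> Rels"
      by blast
    show "r \<in> carrier (free_grp A)"
      using rels_gens[OF uv] unfolding r by (intro reduce_in_free_grp) (simp add: image_Un set_inv_word)
  qed
  have "lift_word H f (reduce (u @ inv_word v)) = \<one>\<^bsub>H\<^esub>" if "(u, v) \<in> Rels" for u v
    using rels[OF that] group.lift_word_closed[OF H f, of v]
    by (simp add: group.lift_word_reduce[OF H f] group.lift_word_append[OF H f]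
        group.lift_word_inv_word[OF H f] group.r_inv[OF H])
  with R_closed have "?R \<subseteq> kernel (free_grp A) H (lift_word H f)"
    unfolding kernel_def by blast
  then have "normal_closure (free_grp A) ?R \<subseteq> kernel (free_grp A) H (lift_word H f)"
    by (rule normal.normal_closure_subset[OF L.normal_kernel])
  then obtain \<theta> where "\<theta> \<in> hom (presented_grp A Rels) H"
    and "\<And>x. x \<in> carrier (free_grp A) \<Longrightarrow>
           \<theta> (normal_closure (free_grp A) ?R #>\<^bsub>free_grp A\<^esub> x) = lift_word H f x"
    using L.FactGroup_universal_kernel[OF F.normal_closure_normal[OF R_closed]]
    unfolding presented_grp_def by blast
  then show thesis
    using that by (simp add: pclass_def reduce_in_free_grp group.lift_word_reduce[OF H f])
qed

lemma F2n_gens_iff [simp]: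
  "Xg k \<in> F2n_gens n \<longleftrightarrow> 1 \<le> k \<and> k \<le> n" "Yg k \<in> F2n_gens n \<longleftrightarrow> 1 \<le> k \<and> k \<le> n"
  by (auto simp: F2n_gens_def)

lemma fvb_gens_iff [simp]:
  "Sig i \<in> fvb_gens n \<longleftrightarrow> 1 \<le> i \<and> i \<le> n - 1" "Rho i \<in> fvb_gens n \<longleftrightarrow> 1 \<le> i \<and> i \<le> n - 1"
  by (auto simp: fvb_gens_def)

text \<open>Generators with an index outside 1..n-1 do not occur in FVB n; sending them to the
  identity makes the assignment total.\<close>

definition fvb_img :: "nat \<Rightarrow> bgen \<Rightarrow> fgen \<Rightarrow> fgen word" where
  "fvb_img n b = (case b of
      Sig i \<Rightarrow> if 1 \<le> i \<and> i < n then s_img i else gen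
    | Rho i \<Rightarrow> if 1 \<le> i \<and> i < n then r_img i else gen)"

lemma fvb_img_closed: "fvb_img n b ` F2n_gens n \<subseteq> carrier (free_grp (F2n_gens n))"
  by (auto simp: fvb_img_def s_img_def r_img_def gen_def free_grp_carrier F2n_gens_def
      split: bgen.splits)

lemma free_ext_s_img_s_img: "free_ext (s_img i) (s_img i a) = gen a"
  by (auto simp: s_img_def gen_def free_ext_Cons inv_word_def)

lemma free_ext_r_img_r_img: "free_ext (r_img i) (r_img i a) = gen a"
  by (auto simp: r_img_def gen_def free_ext_Cons inv_word_def)

lemma group_F2n: "group (F2n n)"
  by (simp add: F2n_def group_free_grp)

definition fvb_aut :: "nat \<Rightarrow> bgen \<Rightarrow> fgen word \<Rightarrow> fgen word" where
  "fvb_aut n = (\<lambda>b. free_endo (F2n_gens n) (fvb_img n b))"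

lemma fvb_aut_in_auto: "fvb_aut n b \<in> auto (F2n n)"
  unfolding F2n_def fvb_aut_def
  by (rule free_endo_in_auto[OF fvb_img_closed])
    (auto simp: fvb_img_def free_ext_s_img_s_img free_ext_r_img_r_img free_ext_gen gen_def
      split: bgen.splits)

lemma fvb_aut_Sig: "1 \<le> i \<Longrightarrow> i < n \<Longrightarrow> fvb_aut n (Sig i) = s_aut n i"
  and fvb_aut_Rho: "1 \<le> i \<Longrightarrow> i < n \<Longrightarrow> fvb_aut n (Rho i) = r_aut n i"
  by (simp_all add: fvb_aut_def fvb_img_def free_endo_def s_aut_def r_aut_def F2n_def)

lemma lift_word_fvb_aut_apply:
  assumes "\<forall>l \<in> set w. \<not> fst l" "x \<in> carrier (F2n n)"
  shows "lift_word (AutR (F2n n)) (fvb_aut n) w x = fold free_ext (map (fvb_img n \<circ> snd) w) x"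
  using lift_word_AutR_free_endo[where img = "fvb_img n"] fvb_aut_in_auto assms
  by (simp add: fvb_aut_def F2n_def)

lemma fvb_rels_positive: "(u, v) \<in> fvb_rels n \<Longrightarrow> (\<forall>l \<in> set u. \<not> fst l) \<and> (\<forall>l \<in> set v. \<not> fst l)"
  unfolding fvb_rels_def by (elim UnE CollectE exE conjE) simp_all

lemma fvb_rels_gens: "(u, v) \<in> fvb_rels n \<Longrightarrow> snd ` set u \<subseteq> fvb_gens n \<and> snd ` set v \<subseteq> fvb_gens n"
  unfolding fvb_rels_def by (elim UnE CollectE exE conjE) auto

lemma fvb_rels_act_on_gen:
  assumes "(u, v) \<in> fvb_rels n"
  shows "fold free_ext (map (fvb_img n \<circ> snd) u) (gen a) = fold free_ext (map (fvb_img n \<circ> snd) v) (gen a)"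
  using assms unfolding fvb_rels_def
  by (cases a; elim UnE CollectE exE conjE)
    (auto simp: fvb_img_def s_img_def r_img_def gen_def free_ext_Cons inv_word_def)

lemma lift_word_fvb_aut_rels:
  assumes "(u, v) \<in> fvb_rels n"
  shows "lift_word (AutR (F2n n)) (fvb_aut n) u = lift_word (AutR (F2n n)) (fvb_aut n) v"
  using fvb_rels_positive[OF assms] fvb_rels_act_on_gen[OF assms] fvb_aut_in_auto[of n]
  unfolding fvb_aut_def F2n_def by (intro lift_word_AutR_free_endo_eqI) simp_all

lemma forbidden_relation_act:
  assumes "1 \<le> i" "i + 2 \<le> n"
  shows "fold free_ext (map (fvb_img n \<circ> snd) (rh i @ sg (i+1) @ sg i)) (gen (Xg (i+2)))
           = [(False, Xg i), (True, Yg (i+1)), (True, Yg (i+2))]"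
    and "fold free_ext (map (fvb_img n \<circ> snd) (sg (i+1) @ sg i @ rh (i+1))) (gen (Xg (i+2)))
           = [(False, Xg i), (True, Yg (i+2)), (True, Yg (i+1))]"
  using assms by (simp_all add: fvb_img_def s_img_def r_img_def gen_def free_ext_Cons inv_word_def)

lemma lift_word_fvb_aut_forbidden:
  assumes "1 \<le> i" "i + 2 \<le> n"
  shows "lift_word (AutR (F2n n)) (fvb_aut n) (rh i @ sg (i+1) @ sg i)
           \<noteq> lift_word (AutR (F2n n)) (fvb_aut n) (sg (i+1) @ sg i @ rh (i+1))"
proof -
  let ?x = "gen (Xg (i+2))"
  have x: "?x \<in> carrier (F2n n)"
    using assms by (simp add: F2n_def gen_def free_grp_carrier)
  have "lift_word (AutR (F2n n)) (fvb_aut n) (rh i @ sg (i+1) @ sg i) ?x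
          = [(False, Xg i), (True, Yg (i+1)), (True, Yg (i+2))]"
    using lift_word_fvb_aut_apply[OF _ x, of "rh i @ sg (i+1) @ sg i"] forbidden_relation_act(1)[OF assms]
    by simp
  moreover have "lift_word (AutR (F2n n)) (fvb_aut n) (sg (i+1) @ sg i @ rh (i+1)) ?x
          = [(False, Xg i), (True, Yg (i+2)), (True, Yg (i+1))]"
    using lift_word_fvb_aut_apply[OF _ x, of "sg (i+1) @ sg i @ rh (i+1)"] forbidden_relation_act(2)[OF assms]
    by simp
  ultimately show ?thesis
    by auto
qed

theorem theorem1:
  fixes n :: nat
  assumes "n \<ge> 2"
  shows "\<exists>\<theta>. \<theta> \<in> hom (FVB n) (AutR (F2n n))
           \<and> (\<forall>i. 1 \<le> i \<and> i \<le> n - 1 \<longrightarrow>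
                  \<theta> (fvb_elt n (sg i)) = s_aut n i \<and> \<theta> (fvb_elt n (rh i)) = r_aut n i)
           \<and> (\<forall>i. 1 \<le> i \<and> i \<le> n - 2 \<longrightarrow>
                  \<theta> (fvb_elt n (rh i @ sg (i+1) @ sg i))
                  \<noteq> \<theta> (fvb_elt n (sg (i+1) @ sg i @ rh (i+1))))"
proof -
  interpret Aut: group "AutR (F2n n)"
    by (rule group.group_AutR[OF group_F2n])
  have closed: "range (fvb_aut n) \<subseteq> carrier (AutR (F2n n))"
    using fvb_aut_in_auto by (auto simp: AutR_carrier)
  obtain \<theta> where hom: "\<theta> \<in> hom (FVB n) (AutR (F2n n))"
    and \<theta>: "\<And>w. snd ` set w \<subseteq> fvb_gens n \<Longrightarrow> \<theta> (fvb_elt n w) = lift_word (AutR (F2n n)) (fvb_aut n) w"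
    using presented_grp_universal[OF Aut.is_group closed lift_word_fvb_aut_rels fvb_rels_gens]
    unfolding FVB_def fvb_elt_def by blast
  show ?thesis
  proof (intro exI conjI allI impI)
    fix i assume "1 \<le> i \<and> i \<le> n - 1"
    then have "1 \<le> i" "i < n"
      by arith+
    then show "\<theta> (fvb_elt n (sg i)) = s_aut n i" "\<theta> (fvb_elt n (rh i)) = r_aut n i"
      using \<theta> Aut.lift_word_singleton[OF closed] by (simp_all add: fvb_aut_Sig fvb_aut_Rho)
  next
    fix i assume "1 \<le> i \<and> i \<le> n - 2"
    then have i: "1 \<le> i" "i + 2 \<le> n"
      by arith+
    then have "snd ` set (rh i @ sg (i+1) @ sg i) \<subseteq> fvb_gens n"
      and "snd ` set (sg (i+1) @ sg i @ rh (i+1)) \<subseteq> fvb_gens n"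
      by auto
    then show "\<theta> (fvb_elt n (rh i @ sg (i+1) @ sg i)) \<noteq> \<theta> (fvb_elt n (sg (i+1) @ sg i @ rh (i+1)))"
      using lift_word_fvb_aut_forbidden[OF i] by (simp only: \<theta> not_False_eq_True)
  qed (fact hom)
qed

end
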